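(* Let $\mathcal{V}$ be a finite vocabulary, $L\ge 1$, $\mathbf{m}\notin\mathcal{V}$ a mask token, $\mathcal{Z}:=(\mathcal{V}\cup\{\mathbf{m}\})^L$, and $p_{\mathrm{data}}$ a probability distribution on $\mathcal{V}^L$. Fix an integer $K\ge 1$ and the time grid $t_j:=1-j/K$, $j=0,1,\dots,K$. Let $g_\phi$ be an unmasking policy, i.e. for each $\mathbf{z}\in\mathcal{Z}$ and time $t$, $g_\phi(\cdot\mid\mathbf{z},t)$ is a probability distribution on the masked index set $\mathrm{msk}(\mathbf{z})$. Consider two Markov chains on $\mathcal{Z}$, both started at the fully masked state $(\mathbf{m},\dots,\mathbf{m})$: (1) Idealized inference chain: given $\mathbf{z}_{t_j}$, sample $I_j\sim g_\phi(\cdot\mid\mathbf{z}_{t_j},t_j)$, then sample $V_j\sim p(\mathbf{x}_0^{I_j}=\cdot\mid\mathbf{z}_{t_j})$, and set $\mathbf{z}_{t_{j+1}}:=\mathbf{z}_{t_j}^{(I_j\leftarrow V_j)}$. Let $q_{t_j}$ be the law of $\mathbf{z}_{t_j}$. (2) Teacher-forced chain: first sample $\mathbf{x}_0\sim p_{\mathrm{data}}$ and set $\tilde{\mathbf{z}}_{t_0}=(\mathbf{m},\dots,\mathbf{m})$; given $\tilde{\mathbf{z}}_{t_j}$, sample $I_j\sim g_\phi(\cdot\mid\tilde{\mathbf{z}}_{t_j},t_j)$ and set $\tilde{\mathbf{z}}_{t_{j+1}}:=\tilde{\mathbf{z}}_{t_j}^{(I_j\leftarrow \mathbf{x}_0^{I_j})}$.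 Let $\tilde q_{t_j}$ be the marginal law of $\tilde{\mathbf{z}}_{t_j}$ (after integrating over $\mathbf{x}_0\sim p_{\mathrm{data}}$). Then $q_{t_j}=\tilde q_{t_j}$ for every $j\in\{0,1,\dots,K\}$.
   Context: For $\mathbf{z}\in\mathcal{Z}$, $\mathrm{um}(\mathbf{z}):=\{i\in[L]:\mathbf{z}^i\neq\mathbf{m}\}$ and $\mathrm{msk}(\mathbf{z}):=[L]\setminus\mathrm{um}(\mathbf{z})$. For $i\in[L]$, $v\in\mathcal{V}$, $\mathbf{z}^{(i\leftarrow v)}$ denotes $\mathbf{z}$ with its $i$-th entry replaced by $v$. For $\mathbf{x}_0\sim p_{\mathrm{data}}$, $\mathbf{z}\in\mathcal{Z}$ and $i\in\mathrm{msk}(\mathbf{z})$, the ground-truth unmasking posterior is $p(\mathbf{x}_0^i=v\mid\mathbf{z}):=\mathbb{P}(\mathbf{x}_0^i=v\mid \mathbf{x}_0^{\mathrm{um}(\mathbf{z})}=\mathbf{z}^{\mathrm{um}(\mathbf{z})})$ (for states $\mathbf{z}$ reached with positive probability). The policy $g_\phi$ depends only on the current (partially masked) state and time, not on any hidden clean tokens. *)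

theory Defs
  imports "HOL-Probability.Probability"
begin

text \<open>Positions [L] are a finite type 'n (so L = CARD('n) >= 1); the vocabulary is a
finite type 'v; the mask token m is None, so Z = ('n => 'v option).
A clean sequence in V^L is a function 'n => 'v.\<close>

definition um :: "('n \<Rightarrow> 'v option) \<Rightarrow> 'n set" where
  "um z = {i. z i \<noteq> None}"

definition msk :: "('n \<Rightarrow> 'v option) \<Rightarrow> 'n set" where
  "msk z = UNIV - um z"

definition all_masked :: "'n \<Rightarrow> 'v option" where
  "all_masked = (\<lambda>_. None)"

definition consistent :: "('n \<Rightarrow> 'v option) \<Rightarrow> ('n \<Rightarrow> 'v) set" where
  "consistent z = {x. \<forall>i\<in>um z. z i = Some (x i)}"

text \<open>Ground-truth unmasking posterior p(x0^i = . | z). Only meaningful for states z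
reached with positive probability; for other states an arbitrary (fixed) choice is made.\<close>
definition posterior :: "('n \<Rightarrow> 'v) pmf \<Rightarrow> ('n \<Rightarrow> 'v option) \<Rightarrow> 'n \<Rightarrow> 'v pmf" where
  "posterior pdata z i =
     (if set_pmf pdata \<inter> consistent z \<noteq> {}
      then map_pmf (\<lambda>x. x i) (cond_pmf pdata (consistent z))
      else return_pmf undefined)"

definition tgrid :: "nat \<Rightarrow> nat \<Rightarrow> real" where
  "tgrid K j = 1 - real j / real K"

fun infer_chain ::
  "('n \<Rightarrow> 'v) pmf \<Rightarrow> (('n \<Rightarrow> 'v option) \<Rightarrow> real \<Rightarrow> 'n pmf) \<Rightarrow> nat \<Rightarrow> nat \<Rightarrow> ('n \<Rightarrow> 'v option) pmf"
where
  "infer_chain pdata g K 0 = return_pmf all_masked"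
| "infer_chain pdata g K (Suc j) =
     bind_pmf (infer_chain pdata g K j) (\<lambda>z.
       bind_pmf (g z (tgrid K j)) (\<lambda>i.
         bind_pmf (posterior pdata z i) (\<lambda>v. return_pmf (z(i := Some v)))))"

fun tf_chain ::
  "(('n \<Rightarrow> 'v option) \<Rightarrow> real \<Rightarrow> 'n pmf) \<Rightarrow> nat \<Rightarrow> ('n \<Rightarrow> 'v) \<Rightarrow> nat \<Rightarrow> ('n \<Rightarrow> 'v option) pmf"
where
  "tf_chain g K x0 0 = return_pmf all_masked"
| "tf_chain g K x0 (Suc j) =
     bind_pmf (tf_chain g K x0 j) (\<lambda>z.
       bind_pmf (g z (tgrid K j)) (\<lambda>i. return_pmf (z(i := Some (x0 i)))))"

definition tf_marginal ::
  "('n \<Rightarrow> 'v) pmf \<Rightarrow> (('n \<Rightarrow> 'v option) \<Rightarrow> real \<Rightarrow> 'n pmf) \<Rightarrow> nat \<Rightarrow> nat \<Rightarrow> ('n \<Rightarrow> 'v option) pmf"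
where
  "tf_marginal pdata g K j = bind_pmf pdata (\<lambda>x0. tf_chain g K x0 j)"

end

theory Submission
  imports Defs
begin

text \<open>Couple every state z of the inference chain with a clean sequence drawn from
p_data conditioned on agreeing with z. Revealing position i of that clean sequence is,
by Bayes' rule, the same as drawing its value from the posterior and then conditioning
further on the revealed value. Hence the joint law of state and clean sequence in the
teacher-forced chain stays equal to this coupling at every step, and its first marginal
is the law of the inference chain.\<close>

lemma measure_cond_pmf:
  assumes "set_pmf p \<inter> A \<noteq> {}"
  shows "measure (cond_pmf p A) B = measure p (A \<inter> B) / measure p A"
  using emeasure_measure_pmf_not_zero[OF assms]
  by (simp add: cond_pmf.rep_eq[OF assms] measure_pmf.emeasure_eq_measure)

lemma cond_pmf_cond_pmf:
  assumes "set_pmf p \<inter> (A \<inter> B) \<noteq> {}"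
  shows "cond_pmf (cond_pmf p A) B = cond_pmf p (A \<inter> B)"
proof (rule pmf_eqI)
  fix x
  have A: "set_pmf p \<inter> A \<noteq> {}"
    using assms by blast
  then have B: "set_pmf (cond_pmf p A) \<inter> B \<noteq> {}"
    using assms by (simp add: set_cond_pmf Int_assoc)
  show "pmf (cond_pmf (cond_pmf p A) B) x = pmf (cond_pmf p (A \<inter> B)) x"
    using measure_measure_pmf_not_zero[OF A]
    by (simp add: pmf_cond[OF B] pmf_cond[OF assms] pmf_cond[OF A] measure_cond_pmf[OF A])
qed

lemma cond_pmf_UNIV: "cond_pmf p UNIV = p"
proof (rule pmf_eqI)
  have "set_pmf p \<inter> UNIV \<noteq> {}"
    using set_pmf_not_empty by auto
  then show "pmf (cond_pmf p UNIV) x = pmf p x" for x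
    by (simp add: pmf_cond)
qed

lemma bind_pmf_disintegrate:
  "bind_pmf p (\<lambda>x. f (h x) x) =
   bind_pmf (map_pmf h p) (\<lambda>v. bind_pmf (cond_pmf p {x. h x = v}) (f v))"
proof -
  have "p = bind_pmf (map_pmf h p) (\<lambda>v. cond_pmf p {x. h x = v})"
    by (rule bind_cond_pmf_cancel[symmetric]) (auto simp: vimage_def)
  then have "bind_pmf p (\<lambda>x. f (h x) x) =
      bind_pmf (map_pmf h p) (\<lambda>v. bind_pmf (cond_pmf p {x. h x = v}) (\<lambda>x. f (h x) x))"
    by (metis bind_assoc_pmf)
  also have "\<dots> = bind_pmf (map_pmf h p) (\<lambda>v. bind_pmf (cond_pmf p {x. h x = v}) (f v))"
  proof (intro bind_pmf_cong refl)
    fix v x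
    assume "v \<in> set_pmf (map_pmf h p)" and "x \<in> set_pmf (cond_pmf p {x. h x = v})"
    then show "f (h x) x = f v x"
      by (subst (asm) set_cond_pmf) auto
  qed
  finally show ?thesis .
qed

lemma consistent_all_masked: "consistent all_masked = UNIV"
  by (simp add: consistent_def um_def all_masked_def)

lemma consistent_fun_upd:
  assumes "x \<in> consistent z"
  shows "consistent (z(i := Some (x i))) = consistent z \<inter> {y. y i = x i}"
  using assms unfolding consistent_def um_def by (auto; metis option.inject)

definition posterior_coupling ::
  "('n \<Rightarrow> 'v) pmf \<Rightarrow> ('n \<Rightarrow> 'v option) pmf \<Rightarrow> (('n \<Rightarrow> 'v option) \<times> ('n \<Rightarrow> 'v)) pmf"
where
  "posterior_coupling pdata q =
     bind_pmf q (\<lambda>z. map_pmf (\<lambda>x. (z, x)) (cond_pmf pdata (consistent z)))"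

definition tf_joint ::
  "('n \<Rightarrow> 'v) pmf \<Rightarrow> (('n \<Rightarrow> 'v option) \<Rightarrow> real \<Rightarrow> 'n pmf) \<Rightarrow> nat \<Rightarrow> nat \<Rightarrow>
   (('n \<Rightarrow> 'v option) \<times> ('n \<Rightarrow> 'v)) pmf"
where
  "tf_joint pdata g K j = bind_pmf pdata (\<lambda>x. map_pmf (\<lambda>z. (z, x)) (tf_chain g K x j))"

lemma map_fst_posterior_coupling: "map_pmf fst (posterior_coupling pdata q) = q"
  by (simp add: posterior_coupling_def map_bind_pmf pmf.map_comp o_def map_pmf_const
      bind_return_pmf')

lemma map_fst_tf_joint: "map_pmf fst (tf_joint pdata g K j) = tf_marginal pdata g K j"
  by (simp add: tf_joint_def tf_marginal_def map_bind_pmf pmf.map_comp o_def)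

lemma posterior_consistent:
  assumes "set_pmf pdata \<inter> consistent z \<noteq> {}"
  shows "posterior pdata z i = map_pmf (\<lambda>x. x i) (cond_pmf pdata (consistent z))"
  using assms by (simp add: posterior_def)

lemma infer_chain_consistent:
  "z \<in> set_pmf (infer_chain pdata g K j) \<Longrightarrow> set_pmf pdata \<inter> consistent z \<noteq> {}"
proof (induction j arbitrary: z)
  case 0
  then show ?case
    using set_pmf_not_empty[of pdata] by (simp add: consistent_all_masked)
next
  case (Suc j)
  then obtain z0 i v where z0: "z0 \<in> set_pmf (infer_chain pdata g K j)"
    and v: "v \<in> set_pmf (posterior pdata z0 i)" and z: "z = z0(i := Some v)"
    by auto
  from v obtain x where x: "x \<in> set_pmf pdata" "x \<in> consistent z0" and "v = x i"
    by (auto simp: posterior_consistent[OF Suc.IH[OF z0]] set_cond_pmf[OF Suc.IH[OF z0]])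
  then have "x \<in> consistent z"
    using z consistent_fun_upd[OF x(2)] by blast
  with x show ?case by blast
qed

lemma reveal_eq_posterior_coupling:
  assumes "set_pmf pdata \<inter> consistent z \<noteq> {}"
  shows "map_pmf (\<lambda>x. (z(i := Some (x i)), x)) (cond_pmf pdata (consistent z)) =
    posterior_coupling pdata (map_pmf (\<lambda>v. z(i := Some v)) (posterior pdata z i))"
proof -
  let ?C = "cond_pmf pdata (consistent z)"
  have "map_pmf (\<lambda>x. (z(i := Some (x i)), x)) ?C =
      bind_pmf (map_pmf (\<lambda>x. x i) ?C)
        (\<lambda>v. map_pmf (\<lambda>x. (z(i := Some v), x)) (cond_pmf ?C {x. x i = v}))"
    using bind_pmf_disintegrate[of ?C "\<lambda>v x. return_pmf (z(i := Some v), x)" "\<lambda>x. x i"]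
    by (simp add: map_pmf_def)
  also have "\<dots> = bind_pmf (map_pmf (\<lambda>x. x i) ?C) (\<lambda>v.
      map_pmf (\<lambda>x. (z(i := Some v), x)) (cond_pmf pdata (consistent (z(i := Some v)))))"
  proof (intro bind_pmf_cong refl)
    fix v assume "v \<in> set_pmf (map_pmf (\<lambda>x. x i) ?C)"
    then obtain x where x: "x \<in> set_pmf pdata" "x \<in> consistent z" and v: "v = x i"
      using assms by (auto simp: set_cond_pmf)
    then have "set_pmf pdata \<inter> (consistent z \<inter> {y. y i = x i}) \<noteq> {}"
      by blast
    then show "map_pmf (\<lambda>x. (z(i := Some v), x)) (cond_pmf ?C {x. x i = v}) =
        map_pmf (\<lambda>x. (z(i := Some v), x)) (cond_pmf pdata (consistent (z(i := Some v))))"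
      by (simp add: v cond_pmf_cond_pmf consistent_fun_upd[OF x(2)])
  qed
  finally show ?thesis
    by (simp add: posterior_coupling_def posterior_consistent[OF assms] bind_map_pmf)
qed

lemma tf_joint_eq_posterior_coupling:
  "tf_joint pdata g K j = posterior_coupling pdata (infer_chain pdata g K j)"
proof (induction j)
  case 0
  then show ?case
    by (simp add: tf_joint_def posterior_coupling_def consistent_all_masked cond_pmf_UNIV
        map_pmf_def bind_return_pmf)
next
  case (Suc j)
  let ?q = "infer_chain pdata g K j" and ?t = "tgrid K j"
  let ?C = "\<lambda>z. cond_pmf pdata (consistent z)"
  have "tf_joint pdata g K (Suc j) = bind_pmf (tf_joint pdata g K j)
      (\<lambda>(z, x). bind_pmf (g z ?t) (\<lambda>i. return_pmf (z(i := Some (x i)), x)))"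
    by (simp add: tf_joint_def bind_assoc_pmf map_pmf_def bind_return_pmf)
  also have "\<dots> = bind_pmf ?q (\<lambda>z. bind_pmf (?C z) (\<lambda>x.
      bind_pmf (g z ?t) (\<lambda>i. return_pmf (z(i := Some (x i)), x))))"
    by (simp add: Suc.IH posterior_coupling_def bind_assoc_pmf map_pmf_def bind_return_pmf)
  also have "\<dots> = bind_pmf ?q (\<lambda>z. bind_pmf (g z ?t) (\<lambda>i.
      map_pmf (\<lambda>x. (z(i := Some (x i)), x)) (?C z)))"
    by (subst bind_commute_pmf) (simp add: map_pmf_def)
  also have "\<dots> = bind_pmf ?q (\<lambda>z. bind_pmf (g z ?t) (\<lambda>i.
      posterior_coupling pdata (map_pmf (\<lambda>v. z(i := Some v)) (posterior pdata z i))))"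
    by (intro bind_pmf_cong refl reveal_eq_posterior_coupling infer_chain_consistent) assumption
  also have "\<dots> = posterior_coupling pdata (infer_chain pdata g K (Suc j))"
    by (simp add: posterior_coupling_def bind_assoc_pmf bind_map_pmf map_pmf_def bind_return_pmf)
  finally show ?case .
qed

theorem proposition1:
  fixes pdata :: "('n::finite \<Rightarrow> 'v::finite) pmf"
    and g :: "('n \<Rightarrow> 'v option) \<Rightarrow> real \<Rightarrow> 'n pmf"
    and K :: nat
  assumes "K \<ge> 1"
    and "\<And>z t. msk z \<noteq> {} \<Longrightarrow> set_pmf (g z t) \<subseteq> msk z"
  shows "\<forall>j \<le> K. infer_chain pdata g K j = tf_marginal pdata g K j"
  using map_fst_posterior_coupling[of pdata] map_fst_tf_joint[of pdata g K]
  by (simp add: tf_joint_eq_posterior_coupling)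

end
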